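(* Let $n=3$ and let $l_1,l_2,l_3,l_\infty$ be nonnegative integers. Two diagrams $x,y\in X(l_1,l_2,l_3,l_\infty)$ lie in the same $J_3$-orbit if and only if they have the same border thickness.
   Context: Cactus group: $J_n$ is the group generated by $s_{p,q}$, $1\le p<q\le n$, subject to the relations $s_{p,q}^2=e$; $s_{p,q}s_{p',q'}=s_{p',q'}s_{p,q}$ if $[p,q]$ and $[p',q']$ are disjoint; $s_{p,q}s_{p',q'}s_{p,q}=s_{p+q-q',p+q-p'}$ if $p\le p'<q'\le q$. Arc diagrams: fix nonnegative integers $l_1,\dots,l_n,l_\infty$. On the boundary circle of a closed disc place $n+1$ marked positions: position $0$ (occupied by $z_\infty$) and positions $1,\dots,n$ following it clockwise. An arc diagram is a bijective assignment of labels $z_1,\dots,z_n$ to positions $1,\dots,n$ together with a finite collection of simple arcs in the disc, pairwise disjoint except at endpoints, each joining two distinct marked points, such that $z_j$ is an endpoint of exactly $l_j$ arcs ($j\in\{1,\dots,n,\infty\}$; $l_j$ is the valence). Parallel arcs are allowed; diagrams are up to isotopy, equivalently determined by the labelling and the number of arcs between each pair of marked points. $X(l_1,\dots,l_n,l_\infty)$ is the set of such diagrams. Action: $s_{p,q}$ ($1\le p<q\le n$) acts by cutting off positions $p,\dots,q$ with a chord $\ell$ (arcs isotoped to cross $\ell$ at most once), reflecting that region by the reflection reversing $\ell$ (label at position $p+t$ goes to position $q-t$, crossing points on $\ell$ reversed), leaving the rest unchanged and reconnecting arcs at $\ell$. Words act right to left; this is an action of $J_n$. Border thickness: the minimum,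 over the $n+1$ cyclically adjacent pairs of positions $(0,1),(1,2),\dots,(n-1,n),(n,0)$, of the number of arcs joining the two points of the pair. *)

theory Defs
  imports Main
begin

text \<open>An arc diagram is encoded as a pair (lab, c): lab k is the label index j of z_j sitting
at position k (k = 1..n; lab k = 0 otherwise), and c i j is the number of arcs joining the
marked points at positions i and j (positions 0..n, position 0 carrying z_infinity).\<close>

type_synonym diagram = "(nat \<Rightarrow> nat) \<times> (nat \<Rightarrow> nat \<Rightarrow> nat)"

definition arc_diagrams :: "nat \<Rightarrow> (nat \<Rightarrow> nat) \<Rightarrow> nat \<Rightarrow> diagram set" where
  "arc_diagrams n l linf = {(lab, c).
     bij_betw lab {1..n} {1..n} \<and> (\<forall>k. k \<notin> {1..n} \<longrightarrow> lab k = 0) \<and>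
     (\<forall>i j. c i j = c j i) \<and> (\<forall>i. c i i = 0) \<and> (\<forall>i j. n < i \<longrightarrow> c i j = 0) \<and>
     (\<forall>i j k m. i < k \<and> k < j \<and> j < m \<and> m \<le> n \<longrightarrow> c i j = 0 \<or> c k m = 0) \<and>
     (\<Sum>j\<le>n. c 0 j) = linf \<and>
     (\<forall>i\<in>{1..n}. (\<Sum>j\<le>n. c i j) = l (lab i))}"

text \<open>Arcs crossing the chord cutting off positions p..q, listed in order along the chord
starting from its end between positions p-1 and p: inside endpoints (nondecreasing) and
outside endpoints (in the order p-1, ..., 0, n, ..., q+1).\<close>

definition cross_ins :: "nat \<Rightarrow> nat \<Rightarrow> nat \<Rightarrow> (nat \<Rightarrow> nat \<Rightarrow> nat) \<Rightarrow> nat list" where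
  "cross_ins n p q c =
     concat (map (\<lambda>i. replicate (\<Sum>r\<in>{0..n} - {p..q}. c i r) i) [p..<Suc q])"

definition cross_outs :: "nat \<Rightarrow> nat \<Rightarrow> nat \<Rightarrow> (nat \<Rightarrow> nat \<Rightarrow> nat) \<Rightarrow> nat list" where
  "cross_outs n p q c =
     concat (map (\<lambda>r. replicate (\<Sum>i\<in>{p..q}. c i r) r) (rev [0..<p] @ rev [Suc q..<Suc n]))"

text \<open>After reflecting the inside region, the crossing points on the chord are reversed and
inside positions i are sent to p+q-i; the new crossing arcs are reconnected accordingly.\<close>

definition new_cross :: "nat \<Rightarrow> nat \<Rightarrow> nat \<Rightarrow> (nat \<Rightarrow> nat \<Rightarrow> nat) \<Rightarrow> (nat \<times> nat) list" where
  "new_cross n p q c =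
     zip (map (\<lambda>i. p + q - i) (rev (cross_ins n p q c))) (cross_outs n p q c)"

definition act :: "nat \<Rightarrow> nat \<Rightarrow> nat \<Rightarrow> diagram \<Rightarrow> diagram" where
  "act n p q x = (case x of (lab, c) \<Rightarrow>
     (\<lambda>k. if p \<le> k \<and> k \<le> q then lab (p + q - k) else lab k,
      \<lambda>i j. if i \<in> {p..q} \<and> j \<in> {p..q} then c (p + q - i) (p + q - j)
            else if i \<in> {p..q} \<and> j \<le> n then length (filter (\<lambda>e. e = (i, j)) (new_cross n p q c))
            else if j \<in> {p..q} \<and> i \<le> n then length (filter (\<lambda>e. e = (j, i)) (new_cross n p q c))
            else c i j))"

text \<open>A word [g_1,...,g_k] in the generators s_{p,q} acts right to left.\<close>

definition act_word :: "nat \<Rightarrow> (nat \<times> nat) list \<Rightarrow> diagram \<Rightarrow> diagram" where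
  "act_word n w x = foldr (\<lambda>(p, q) y. act n p q y) w x"

definition same_orbit :: "nat \<Rightarrow> diagram \<Rightarrow> diagram \<Rightarrow> bool" where
  "same_orbit n x y \<longleftrightarrow>
     (\<exists>w. set w \<subseteq> {(p, q). 1 \<le> p \<and> p < q \<and> q \<le> n} \<and> act_word n w x = y)"

definition border_thickness :: "nat \<Rightarrow> diagram \<Rightarrow> nat" where
  "border_thickness n x = Min ({snd x i (Suc i) | i. i < n} \<union> {snd x n 0})"

end

theory Submission
  imports Defs
begin

text \<open>A diagram with three labelled points consists of its labelling and six arc counts: a, b, c, d
on the sides (0,1), (1,2), (2,3), (3,0) of the quadrilateral of marked points and e, f on its two
diagonals, which cross, so e f = 0; the border thickness is min a b c d. The generator s_{1,3}
reverses the labelling and the order of the sides, while s_{1,2} and s_{2,3} trade arcs between a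
pair of opposite sides and the diagonals; each generator preserves the thickness and, on diagrams,
is an involution. The generators bring every labelling to the identity, and then
the valences fix e and f and determine (a, b, c, d) up to a shift (a + t, b - t, c + t, d - t).
Along this line the thickness min (min a c + t) (min b d - t) is a tent function of t, so two
diagrams with the same thickness coincide or are mirror images under the reflection
t \<mapsto> min b d - min a c - t, which is realised by the word s_{2,3} s_{1,3} s_{2,3} s_{1,2}.\<close>

text \<open>Fields: labels at positions 1, 2, 3; arcs on (0,1), (1,2), (2,3), (3,0); arcs on (0,2), (1,3).\<close>

datatype diagram3 = Diagram3 nat nat nat nat nat nat nat nat nat

definition labelling3 :: "nat \<Rightarrow> nat \<Rightarrow> nat \<Rightarrow> nat \<Rightarrow> nat" where
  "labelling3 p1 p2 p3 = (\<lambda>k. if k = 1 then p1 else if k = 2 then p2 else if k = 3 then p3 else 0)"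

definition arcs3 :: "nat \<Rightarrow> nat \<Rightarrow> nat \<Rightarrow> nat \<Rightarrow> nat \<Rightarrow> nat \<Rightarrow> nat \<Rightarrow> nat \<Rightarrow> nat" where
  "arcs3 a b c d e f = (\<lambda>i j.
     if i = 0 \<and> j = 1 \<or> i = 1 \<and> j = 0 then a
     else if i = 1 \<and> j = 2 \<or> i = 2 \<and> j = 1 then b
     else if i = 2 \<and> j = 3 \<or> i = 3 \<and> j = 2 then c
     else if i = 3 \<and> j = 0 \<or> i = 0 \<and> j = 3 then d
     else if i = 0 \<and> j = 2 \<or> i = 2 \<and> j = 0 then e
     else if i = 1 \<and> j = 3 \<or> i = 3 \<and> j = 1 then f
     else 0)"

fun to_diagram :: "diagram3 \<Rightarrow> diagram" where
  "to_diagram (Diagram3 p1 p2 p3 a b c d e f) = (labelling3 p1 p2 p3, arcs3 a b c d e f)"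

lemma to_diagram_inject: "to_diagram s = to_diagram t \<longleftrightarrow> s = t"
proof
  assume eq: "to_diagram s = to_diagram t"
  show "s = t"
  proof (cases s; cases t)
    fix p1 p2 p3 a b c d e f q1 q2 q3 a' b' c' d' e' f'
    assume s: "s = Diagram3 p1 p2 p3 a b c d e f" and t: "t = Diagram3 q1 q2 q3 a' b' c' d' e' f'"
    have "labelling3 p1 p2 p3 k = labelling3 q1 q2 q3 k"
      "arcs3 a b c d e f i j = arcs3 a' b' c' d' e' f' i j"
      for k i j using eq unfolding s t by auto
    from this(1)[of 1] this(1)[of 2] this(1)[of 3] this(2)[of 0 1] this(2)[of 1 2] this(2)[of 2 3]
      this(2)[of 3 0] this(2)[of 0 2] this(2)[of 1 3]
    show "s = t" unfolding s t by (simp add: labelling3_def arcs3_def)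
  qed
qed simp

fun valid3 :: "(nat \<Rightarrow> nat) \<Rightarrow> nat \<Rightarrow> diagram3 \<Rightarrow> bool" where
  "valid3 l linf (Diagram3 p1 p2 p3 a b c d e f) \<longleftrightarrow>
     distinct [p1, p2, p3] \<and> {p1, p2, p3} \<subseteq> {1, 2, 3} \<and> e * f = 0 \<and>
     a + d + e = linf \<and> a + b + f = l p1 \<and> b + c + e = l p2 \<and> c + d + f = l p3"

fun thickness3 :: "diagram3 \<Rightarrow> nat" where
  "thickness3 (Diagram3 _ _ _ a b c d _ _) = min (min a c) (min b d)"

fun labels3 :: "diagram3 \<Rightarrow> nat \<times> nat \<times> nat" where
  "labels3 (Diagram3 p1 p2 p3 _ _ _ _ _ _) = (p1, p2, p3)"

lemma nat_le_3_cases: "(i::nat) = 0 \<or> i = 1 \<or> i = 2 \<or> i = 3 \<or> 3 < i"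
  by arith

lemma intervals_upto_3:
  "{0..3::nat} = {0, 1, 2, 3}" "{..3::nat} = {0, 1, 2, 3}" "{1..3::nat} = {1, 2, 3}"
  "{1..2::nat} = {1, 2}" "{2..3::nat} = {2, 3}"
  by auto

lemma labelling3_eq:
  assumes "\<forall>k. k \<notin> {1..3} \<longrightarrow> lab k = 0"
  shows "lab = labelling3 (lab 1) (lab 2) (lab 3)"
proof
  fix k
  show "lab k = labelling3 (lab 1) (lab 2) (lab 3) k"
    using nat_le_3_cases[of k] assms by (elim disjE) (simp_all add: labelling3_def)
qed

lemma arcs3_eq:
  assumes sym: "\<And>i j. c i j = c j i" and "\<And>i. c i i = 0" and out: "\<And>i j. 3 < i \<Longrightarrow> c i j = 0"
  shows "c = arcs3 (c 0 1) (c 1 2) (c 2 3) (c 3 0) (c 0 2) (c 1 3)"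
proof (intro ext)
  fix i j
  have "3 < j \<Longrightarrow> c i j = 0" using sym out by metis
  then show "c i j = arcs3 (c 0 1) (c 1 2) (c 2 3) (c 3 0) (c 0 2) (c 1 3) i j"
    using nat_le_3_cases[of i] nat_le_3_cases[of j] assms
    by (elim disjE; simp add: arcs3_def; metis sym)
qed

lemma arc_diagrams_3_coordinates:
  assumes "x \<in> arc_diagrams 3 l linf"
  obtains s where "valid3 l linf s" "x = to_diagram s"
proof -
  obtain lab c where x: "x = (lab, c)" by (cases x)
  from assms have bij: "bij_betw lab {1..3} {1..3}"
    and lab_out: "\<forall>k. k \<notin> {1..3} \<longrightarrow> lab k = 0"
    and sym: "\<And>i j. c i j = c j i" and diag: "\<And>i. c i i = 0"
    and out: "\<And>i j. 3 < i \<Longrightarrow> c i j = 0"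
    and noncrossing: "\<forall>i j k m. i < k \<and> k < j \<and> j < m \<and> m \<le> 3 \<longrightarrow> c i j = 0 \<or> c k m = 0"
    and val0: "(\<Sum>j\<le>3. c 0 j) = linf"
    and val: "\<forall>i\<in>{1..3}. (\<Sum>j\<le>3. c i j) = l (lab i)"
    unfolding arc_diagrams_def x by auto
  define s where
    "s = Diagram3 (lab 1) (lab 2) (lab 3) (c 0 1) (c 1 2) (c 2 3) (c 3 0) (c 0 2) (c 1 3)"
  have "distinct [lab 1, lab 2, lab 3]"
    using bij_betw_imp_inj_on[OF bij] by (simp add: inj_on_eq_iff)
  moreover have "{lab 1, lab 2, lab 3} \<subseteq> {1, 2, 3}"
    using bij unfolding bij_betw_def intervals_upto_3 by auto
  moreover have "c 0 2 * c 1 3 = 0"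
    using noncrossing[rule_format, of 0 1 2 3] by auto
  moreover have "c 0 1 + c 3 0 + c 0 2 = linf" "c 0 1 + c 1 2 + c 1 3 = l (lab 1)"
    "c 1 2 + c 2 3 + c 0 2 = l (lab 2)" "c 2 3 + c 3 0 + c 1 3 = l (lab 3)"
    using val0 val[rule_format, of 1] val[rule_format, of 2] val[rule_format, of 3]
      sym[of 0 3] sym[of 1 0] sym[of 2 0] sym[of 2 1] sym[of 3 1] sym[of 3 2]
    by (simp_all add: intervals_upto_3 diag)
  ultimately have "valid3 l linf s"
    unfolding s_def by simp
  moreover have "x = to_diagram s"
    unfolding x s_def to_diagram.simps
    using labelling3_eq[OF lab_out] arcs3_eq[of c, OF sym diag out] by (rule arg_cong2)
  ultimately show ?thesis by (rule that)
qed

lemma border_thickness_to_diagram: "border_thickness 3 (to_diagram s) = thickness3 s"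
proof -
  have "{g i | i::nat. i < 3} = {g 0, g 1, g 2}" for g :: "nat \<Rightarrow> nat"
    by (auto simp: numeral_3_eq_3 numeral_2_eq_2 less_Suc_eq)
  then show ?thesis
    by (cases s) (simp add: border_thickness_def arcs3_def min.assoc min.left_commute)
qed

lemma cross_ins_1_2: "cross_ins 3 1 2 (arcs3 a b c d e f) = replicate (a + f) 1 @ replicate (e + c) 2"
  unfolding cross_ins_def intervals_upto_3 by (simp add: upt_rec arcs3_def insert_Diff_if)

lemma cross_outs_1_2: "cross_outs 3 1 2 (arcs3 a b c d e f) = replicate (a + e) 0 @ replicate (f + c) 3"
  unfolding cross_outs_def intervals_upto_3 by (simp add: upt_rec arcs3_def insert_Diff_if)

lemma cross_ins_2_3: "cross_ins 3 2 3 (arcs3 a b c d e f) = replicate (b + e) 2 @ replicate (f + d) 3"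
  unfolding cross_ins_def intervals_upto_3 by (simp add: upt_rec arcs3_def insert_Diff_if)

lemma cross_outs_2_3: "cross_outs 3 2 3 (arcs3 a b c d e f) = replicate (b + f) 1 @ replicate (e + d) 0"
  unfolding cross_outs_def intervals_upto_3 by (simp add: upt_rec arcs3_def insert_Diff_if)

lemma cross_ins_1_3: "cross_ins 3 1 3 (arcs3 a b c d e f) = replicate a 1 @ replicate e 2 @ replicate d 3"
  unfolding cross_ins_def intervals_upto_3 by (simp add: upt_rec arcs3_def insert_Diff_if)

lemma cross_outs_1_3: "cross_outs 3 1 3 (arcs3 a b c d e f) = replicate (a + e + d) 0"
  unfolding cross_outs_def intervals_upto_3 by (simp add: upt_rec arcs3_def insert_Diff_if)

lemma count_pair_zip_replicate2:
  assumes "u \<noteq> v" "s \<noteq> w" "p + q = r + t"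
  shows "length (filter (\<lambda>z. z = (x, y))
      (zip (replicate p u @ replicate q v) (replicate r s @ replicate t w))) =
    (if x = u \<and> y = s then min p r else if x = u \<and> y = w then p - min p r
     else if x = v \<and> y = s then r - min p r else if x = v \<and> y = w then q - (r - min p r) else 0)"
proof (cases "p \<le> r")
  case True
  have "replicate p u @ replicate q v = replicate p u @ replicate (r - p) v @ replicate t v"
    and "replicate r s @ replicate t w = replicate p s @ replicate (r - p) s @ replicate t w"
    using True assms by (simp_all add: replicate_add[symmetric])
  then show ?thesis using True assms by (auto simp: zip_append filter_replicate)
next
  case False
  have "replicate p u @ replicate q v = replicate r u @ replicate (p - r) u @ replicate q v"
    and "replicate r s @ replicate t w = replicate r s @ replicate (p - r) w @ replicate q w"
    using False assms by (simp_all add: replicate_add[symmetric])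
  then show ?thesis using False assms by (auto simp: zip_append filter_replicate)
qed

lemma new_cross_1_2: "new_cross 3 1 2 (arcs3 a b c d e f) =
    zip (replicate (e + c) 1 @ replicate (a + f) 2) (replicate (a + e) 0 @ replicate (f + c) 3)"
  unfolding new_cross_def cross_ins_1_2 cross_outs_1_2 by (simp add: numeral_2_eq_2)

lemma new_cross_2_3: "new_cross 3 2 3 (arcs3 a b c d e f) =
    zip (replicate (f + d) 2 @ replicate (b + e) 3) (replicate (b + f) 1 @ replicate (e + d) 0)"
  unfolding new_cross_def cross_ins_2_3 cross_outs_2_3 by simp

lemma new_cross_1_3: "new_cross 3 1 3 (arcs3 a b c d e f) =
    map (\<lambda>i. (i, 0)) (replicate d 1 @ replicate e 2 @ replicate a 3)"
  unfolding new_cross_def cross_ins_1_3 cross_outs_1_3 by (simp add: zip_replicate2)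

fun move12 :: "diagram3 \<Rightarrow> diagram3" where
  "move12 (Diagram3 p1 p2 p3 a b c d e f) =
     Diagram3 p2 p1 p3 (e + min a c) b (f + min a c) d (a - min a c) (c - min a c)"

fun move23 :: "diagram3 \<Rightarrow> diagram3" where
  "move23 (Diagram3 p1 p2 p3 a b c d e f) =
     Diagram3 p1 p3 p2 a (f + min b d) c (e + min b d) (d - min b d) (b - min b d)"

fun move13 :: "diagram3 \<Rightarrow> diagram3" where
  "move13 (Diagram3 p1 p2 p3 a b c d e f) = Diagram3 p3 p2 p1 d c b a e f"

lemma act_1_2: "act 3 1 2 (to_diagram s) = to_diagram (move12 s)"
proof (cases s)
  case (Diagram3 p1 p2 p3 a b c d e f)
  have "snd (act 3 1 2 (to_diagram s)) i j = snd (to_diagram (move12 s)) i j" for i j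
    using nat_le_3_cases[of i] nat_le_3_cases[of j]
    unfolding Diagram3 to_diagram.simps move12.simps act_def new_cross_1_2 prod.case snd_conv
    by (elim disjE) (simp_all add: count_pair_zip_replicate2 arcs3_def min_def)
  then show ?thesis unfolding Diagram3 by (auto simp: act_def labelling3_def)
qed

lemma act_2_3: "act 3 2 3 (to_diagram s) = to_diagram (move23 s)"
proof (cases s)
  case (Diagram3 p1 p2 p3 a b c d e f)
  have "snd (act 3 2 3 (to_diagram s)) i j = snd (to_diagram (move23 s)) i j" for i j
    using nat_le_3_cases[of i] nat_le_3_cases[of j]
    unfolding Diagram3 to_diagram.simps move23.simps act_def new_cross_2_3 prod.case snd_conv
    by (elim disjE) (simp_all add: count_pair_zip_replicate2 arcs3_def min_def)
  then show ?thesis unfolding Diagram3 by (auto simp: act_def labelling3_def)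
qed

lemma act_1_3: "act 3 1 3 (to_diagram s) = to_diagram (move13 s)"
proof (cases s)
  case (Diagram3 p1 p2 p3 a b c d e f)
  have "snd (act 3 1 3 (to_diagram s)) i j = snd (to_diagram (move13 s)) i j" for i j
    using nat_le_3_cases[of i] nat_le_3_cases[of j]
    unfolding Diagram3 to_diagram.simps move13.simps act_def new_cross_1_3 prod.case snd_conv
    by (elim disjE) (simp_all add: arcs3_def filter_replicate)
  then show ?thesis unfolding Diagram3 by (auto simp: act_def labelling3_def)
qed

definition generators3 :: "(nat \<times> nat) set" where
  "generators3 = {(1, 2), (2, 3), (1, 3)}"

lemma generators3_eq: "{(p, q). 1 \<le> p \<and> p < q \<and> q \<le> (3::nat)} = generators3"
  unfolding generators3_def by auto

definition move :: "nat \<times> nat \<Rightarrow> diagram3 \<Rightarrow> diagram3" where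
  "move g = (if g = (1, 2) then move12 else if g = (2, 3) then move23 else move13)"

lemma act_to_diagram:
  assumes "(p, q) \<in> generators3"
  shows "act 3 p q (to_diagram s) = to_diagram (move (p, q) s)"
proof -
  consider "p = 1" "q = 2" | "p = 2" "q = 3" | "p = 1" "q = 3"
    using assms unfolding generators3_def by blast
  then show ?thesis by cases (simp_all only: act_1_2 act_2_3 act_1_3, simp_all add: move_def)
qed

lemma act_word_to_diagram:
  "set w \<subseteq> generators3 \<Longrightarrow> act_word 3 w (to_diagram s) = to_diagram (foldr move w s)"
proof (induction w)
  case Nil
  then show ?case by (simp add: act_word_def)
next
  case (Cons g w)
  then show ?case by (cases g) (simp add: act_word_def act_to_diagram)
qed

lemma valid3_move12: "valid3 l linf s \<Longrightarrow> valid3 l linf (move12 s)"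
  by (cases s) (auto simp: min_def)

lemma valid3_move23: "valid3 l linf s \<Longrightarrow> valid3 l linf (move23 s)"
  by (cases s) (auto simp: min_def)

lemma valid3_move13: "valid3 l linf s \<Longrightarrow> valid3 l linf (move13 s)"
  by (cases s) auto

lemma thickness3_move12: "valid3 l linf s \<Longrightarrow> thickness3 (move12 s) = thickness3 s"
  by (cases s) auto

lemma thickness3_move23: "valid3 l linf s \<Longrightarrow> thickness3 (move23 s) = thickness3 s"
  by (cases s) auto

lemma thickness3_move13: "thickness3 (move13 s) = thickness3 s"
  by (cases s) (simp add: min.commute)

lemma move12_move12: "valid3 l linf s \<Longrightarrow> move12 (move12 s) = s"
  by (cases s) auto

lemma move23_move23: "valid3 l linf s \<Longrightarrow> move23 (move23 s) = s"
  by (cases s) auto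

lemma move13_move13: "move13 (move13 s) = s"
  by (cases s) simp

lemma valid3_move: "valid3 l linf s \<Longrightarrow> valid3 l linf (move g s)"
  by (simp add: move_def valid3_move12 valid3_move23 valid3_move13)

lemma thickness3_move: "valid3 l linf s \<Longrightarrow> thickness3 (move g s) = thickness3 s"
  by (simp add: move_def thickness3_move12 thickness3_move23 thickness3_move13)

lemma move_move: "valid3 l linf s \<Longrightarrow> move g (move g s) = s"
  by (simp add: move_def move12_move12 move23_move23 move13_move13)

lemma valid3_foldr_move: "valid3 l linf s \<Longrightarrow> valid3 l linf (foldr move w s)"
  by (induction w) (simp_all add: valid3_move)

lemma thickness3_foldr_move: "valid3 l linf s \<Longrightarrow> thickness3 (foldr move w s) = thickness3 s"
  by (induction w) (simp_all add: thickness3_move[OF valid3_foldr_move])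

lemma foldr_move_rev: "valid3 l linf s \<Longrightarrow> foldr move (rev w) (foldr move w s) = s"
proof (induction w arbitrary: s)
  case Nil
  then show ?case by simp
next
  case (Cons g w)
  have "foldr move (rev (g # w)) (foldr move (g # w) s) =
      foldr move (rev w) (move g (move g (foldr move w s)))"
    by simp
  also have "\<dots> = foldr move (rev w) (foldr move w s)"
    using move_move[OF valid3_foldr_move[OF Cons.prems]] by simp
  also have "\<dots> = s"
    using Cons by blast
  finally show ?case .
qed

definition reachable3 :: "diagram3 \<Rightarrow> diagram3 \<Rightarrow> bool" where
  "reachable3 s t \<longleftrightarrow> (\<exists>w. set w \<subseteq> generators3 \<and> foldr move w s = t)"

lemma same_orbit_to_diagram: "same_orbit 3 (to_diagram s) (to_diagram t) \<longleftrightarrow> reachable3 s t"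
  unfolding same_orbit_def reachable3_def generators3_eq
  by (metis act_word_to_diagram to_diagram_inject)

lemma reachable3_refl: "reachable3 s s"
  unfolding reachable3_def by (auto intro: exI[of _ "[]"])

lemma reachable3_trans: "reachable3 s t \<Longrightarrow> reachable3 t u \<Longrightarrow> reachable3 s u"
  unfolding reachable3_def by (metis foldr_append le_sup_iff set_append)

lemma reachable3_sym: "reachable3 s t \<Longrightarrow> valid3 l linf s \<Longrightarrow> reachable3 t s"
  unfolding reachable3_def by (metis foldr_move_rev set_rev)

lemma thickness3_reachable3: "reachable3 s t \<Longrightarrow> valid3 l linf s \<Longrightarrow> thickness3 t = thickness3 s"
  unfolding reachable3_def by (auto simp: thickness3_foldr_move)

lemma valid3_reachable3: "reachable3 s t \<Longrightarrow> valid3 l linf s \<Longrightarrow> valid3 l linf t"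
  unfolding reachable3_def by (auto simp: valid3_foldr_move)

lemma permutations_of_3:
  assumes "distinct [p1, p2, p3]" "{p1, p2, p3} \<subseteq> {1, 2, 3::nat}"
  shows "(p1, p2, p3) \<in> {(1, 2, 3), (2, 1, 3), (1, 3, 2), (3, 2, 1), (2, 3, 1), (3, 1, 2)}"
  using assms by auto

lemma reachable3_standard_labels:
  assumes "valid3 l linf s"
  obtains t where "reachable3 s t" "labels3 t = (1, 2, 3)"
proof (cases s)
  case (Diagram3 p1 p2 p3 a b c d e f)
  let ?words = "{[], [(1, 2)], [(2, 3)], [(1, 3)], [(1, 3), (1, 2)], [(1, 3), (2, 3)]}"
  have "distinct [p1, p2, p3]" "{p1, p2, p3} \<subseteq> {1, 2, 3}"
    using assms Diagram3 by simp_all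
  then have "(p1, p2, p3) \<in> {(1, 2, 3), (2, 1, 3), (1, 3, 2), (3, 2, 1), (2, 3, 1), (3, 1, 2)}"
    by (rule permutations_of_3)
  then have "\<exists>w \<in> ?words. labels3 (foldr move w s) = (1, 2, 3)"
    unfolding Diagram3 by (elim insertE emptyE) (simp_all add: move_def)
  moreover have "\<forall>w \<in> ?words. set w \<subseteq> generators3"
    by (simp add: generators3_def)
  ultimately show ?thesis
    using that unfolding reachable3_def by blast
qed

lemma valid3_standard_fibre:
  assumes "valid3 l linf (Diagram3 1 2 3 a b c d e f)" "valid3 l linf (Diagram3 1 2 3 a' b' c' d' e' f')"
  shows "e' = e" "f' = f" "a' + b' = a + b" "b' + c' = b + c" "c' + d' = c + d"
proof -
  have "e = 0 \<or> f = 0" "e' = 0 \<or> f' = 0"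
    and "a + d + e = a' + d' + e'" "a + b + f = a' + b' + f'" "b + c + e = b' + c' + e'"
      "c + d + f = c' + d' + f'"
    using assms by auto
  then show "e' = e" "f' = f" "a' + b' = a + b" "b' + c' = b + c" "c' + d' = c + d"
    by linarith+
qed

lemma min_shift_fibre:
  fixes a b c d a' b' c' d' :: nat
  assumes "a' + b' = a + b" "b' + c' = b + c" "c' + d' = c + d"
    and "min (min a' c') (min b' d') = min (min a c) (min b d)"
  shows "(a', b', c', d') = (a, b, c, d) \<or>
    (a', b', c', d') =
      (a - min a c + min b d, b - min b d + min a c, c - min a c + min b d, d - min b d + min a c)"
  using assms by (simp add: min_def split: if_splits) arith+

lemma foldr_move_reflection:
  assumes "e = 0 \<or> f = 0"
  shows "foldr move [(2, 3), (1, 3), (2, 3), (1, 2)] (Diagram3 p1 p2 p3 a b c d e f) =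
    Diagram3 p1 p2 p3 (a - min a c + min b d) (b - min b d + min a c) (c - min a c + min b d)
      (d - min b d + min a c) e f"
proof -
  have "min (f + min a c) (e + min a c) = min a c" using assms by auto
  then show ?thesis by (simp add: move_def min_def)
qed

lemma reachable3_if_thickness3_eq:
  assumes "valid3 l linf (Diagram3 1 2 3 a b c d e f)" "valid3 l linf (Diagram3 1 2 3 a' b' c' d' e' f')"
    and "thickness3 (Diagram3 1 2 3 a b c d e f) = thickness3 (Diagram3 1 2 3 a' b' c' d' e' f')"
  shows "reachable3 (Diagram3 1 2 3 a b c d e f) (Diagram3 1 2 3 a' b' c' d' e' f')"
proof -
  have "e' = e" "f' = f" and "e = 0 \<or> f = 0"
    using valid3_standard_fibre[OF assms(1,2)] assms(1) by auto
  moreover have "(a', b', c', d') = (a, b, c, d) \<or>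
    (a', b', c', d') =
      (a - min a c + min b d, b - min b d + min a c, c - min a c + min b d, d - min b d + min a c)"
    using valid3_standard_fibre[OF assms(1,2)] assms(3) by (intro min_shift_fibre) simp_all
  ultimately consider "Diagram3 1 2 3 a' b' c' d' e' f' = Diagram3 1 2 3 a b c d e f"
    | "Diagram3 1 2 3 a' b' c' d' e' f' =
         foldr move [(2, 3), (1, 3), (2, 3), (1, 2)] (Diagram3 1 2 3 a b c d e f)"
    by (auto simp only: foldr_move_reflection prod.inject diagram3.inject)
  then show ?thesis
  proof cases
    case 1
    then show ?thesis by (simp add: reachable3_refl)
  next
    case 2
    then show ?thesis
      unfolding reachable3_def generators3_def
      by (intro exI[of _ "[(2, 3), (1, 3), (2, 3), (1, 2)]"]) simp
  qed
qed

lemma reachable3_iff_thickness3_eq: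
  assumes "valid3 l linf s" "valid3 l linf t"
  shows "reachable3 s t \<longleftrightarrow> thickness3 s = thickness3 t"
proof
  assume "reachable3 s t"
  then show "thickness3 s = thickness3 t" using assms(1) by (simp add: thickness3_reachable3)
next
  assume thickness: "thickness3 s = thickness3 t"
  obtain s' where s': "reachable3 s s'" "labels3 s' = (1, 2, 3)"
    using reachable3_standard_labels[OF assms(1)] .
  obtain t' where t': "reachable3 t t'" "labels3 t' = (1, 2, 3)"
    using reachable3_standard_labels[OF assms(2)] .
  have "valid3 l linf s'" "valid3 l linf t'"
    using s'(1) t'(1) assms by (simp_all add: valid3_reachable3)
  moreover have "thickness3 s' = thickness3 t'"
    using s'(1) t'(1) assms thickness by (simp add: thickness3_reachable3)
  moreover obtain a b c d e f where "s' = Diagram3 1 2 3 a b c d e f"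
    using s'(2) by (cases s') simp
  moreover obtain a' b' c' d' e' f' where "t' = Diagram3 1 2 3 a' b' c' d' e' f'"
    using t'(2) by (cases t') simp
  ultimately have "reachable3 s' t'"
    by (simp only: reachable3_if_thickness3_eq)
  then show "reachable3 s t"
    using s'(1) reachable3_sym[OF t'(1) assms(2)] by (blast intro: reachable3_trans)
qed

theorem mainTheorem8:
  fixes l :: "nat \<Rightarrow> nat" and linf :: nat and x y :: diagram
  assumes "x \<in> arc_diagrams 3 l linf" and "y \<in> arc_diagrams 3 l linf"
  shows "same_orbit 3 x y \<longleftrightarrow> border_thickness 3 x = border_thickness 3 y"
proof -
  obtain s where s: "valid3 l linf s" "x = to_diagram s"
    using assms(1) by (rule arc_diagrams_3_coordinates)
  obtain t where t: "valid3 l linf t" "y = to_diagram t"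
    using assms(2) by (rule arc_diagrams_3_coordinates)
  have "same_orbit 3 x y \<longleftrightarrow> reachable3 s t"
    using s t by (simp add: same_orbit_to_diagram)
  also have "\<dots> \<longleftrightarrow> thickness3 s = thickness3 t"
    using s t by (simp add: reachable3_iff_thickness3_eq)
  also have "\<dots> \<longleftrightarrow> border_thickness 3 x = border_thickness 3 y"
    using s t by (simp add: border_thickness_to_diagram)
  finally show ?thesis .
qed

end
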